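(* Let $R$ be a commutative ring and $\mathscr{M}$ a $\mathcal{B}$-diagram of $R$-modules such that $\mathrm{im}(\mathscr{M}(\mho_\sigma))\subseteq\ker(\mathscr{M}(\Omega_\sigma))$ for every vertex $\sigma$. If $0\ne m\in\mathscr{M}(\emptyset)$, then there exists a ray $(\sigma^i)$ in $\mathcal{B}$ such that exactly one of the following holds: (1) there exists $j\in\mathbb{N}$ with $m\in\widetilde{\mu}_{\le j}\ker(\mathscr{M}(\Omega_{\sigma^j}))\setminus\widetilde{\mu}_{\le j}\,\mathrm{im}(\mathscr{M}(\mho_{\sigma^j}))$; (2) for each $j\in\mathbb{N}$, $m\in\widetilde{\mu}_{\le j}M[j]\setminus\widetilde{\mu}_{\le j}0$, and so $m\in\bigcap_{i\in\mathbb{N}}\widetilde{\mu}_{\le i}M[i]\setminus\bigcup_{i\in\mathbb{N}}\widetilde{\mu}_{\le i}0$.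
   Context: The quiver $\mathcal{B}$: vertices are finite $0/1$-sequences including the empty sequence $\emptyset$; for each vertex $\sigma$ there are arrows $\Omega_\sigma\colon\sigma\to\sigma1$ and $\mho_\sigma\colon\sigma0\to\sigma$ ($\sigma1,\sigma0$ = $\sigma$ with $1$, resp. $0$, appended). A $\mathcal{B}$-diagram assigns $R$-modules to vertices and $R$-linear maps to arrows. A ray is a sequence $(\sigma^i)_{i\ge0}$ with $\sigma^0=\emptyset$ and $\sigma^i$ equal to $\sigma^{i-1}$ with one symbol appended; $\sigma_i=+$ if that symbol is $1$, $-$ if $0$. Given a ray, $M[i]=\mathscr{M}(\sigma^i)$, and $\mu_i$ ($i\ge1$) is the image of the arrow between $\sigma^{i-1}$ and $\sigma^i$: $\mu_i\colon M[i]\to M[i-1]$ if $\sigma_i=-$, $\mu_i\colon M[i-1]\to M[i]$ if $\sigma_i=+$. $\widetilde{\mu}_i\subseteq M[i]\oplus M[i-1]$ is $\{(x,\mu_i(x))\}$ if $\sigma_i=-$ and $\{(\mu_i(y),y)\}$ if $\sigma_i=+$. For $S\subseteq M[n]$, $\widetilde{\mu}_{\le n}S$ is the set of $m_0\in M[0]$ for which there are $m_i\in M[i]$ ($1\le i\le n$) with $m_n\in S$ and $(m_i,m_{i-1})\in\widetilde{\mu}_i$ for $1\le i\le n$; $\widetilde{\mu}_{\le0}S=S$; $\widetilde{\mu}_{\le i}0=\widetilde{\mu}_{\le i}\{0\}$. *)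

theory Defs
  imports "HOL-Algebra.Module"
begin

text \<open>Vertices of the quiver B: finite 0/1-sequences, encoded as bool lists
  (True = 1, False = 0); appending a symbol is appending at the end of the list.
  A B-diagram of R-modules is given by a module M sigma for every vertex (all modules
  share one element type) together with maps
  Om sigma : M sigma -> M (sigma @ [True])   (image of Omega_sigma) and
  Mh sigma : M (sigma @ [False]) -> M sigma  (image of Mho_sigma).\<close>

type_synonym vertex = "bool list"

definition linmap :: "('r, 'c) ring_scheme \<Rightarrow> ('r, 'm) module \<Rightarrow> ('r, 'm) module \<Rightarrow> ('m \<Rightarrow> 'm) \<Rightarrow> bool" where
  "linmap R M N f \<longleftrightarrow>
     f \<in> carrier M \<rightarrow> carrier N \<and>
     (\<forall>x\<in>carrier M. \<forall>y\<in>carrier M. f (x \<oplus>\<^bsub>M\<^esub> y) = f x \<oplus>\<^bsub>N\<^esub> f y) \<and>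
     (\<forall>a\<in>carrier R. \<forall>x\<in>carrier M. f (a \<odot>\<^bsub>M\<^esub> x) = a \<odot>\<^bsub>N\<^esub> f x)"

definition B_diagram ::
  "('r, 'c) ring_scheme \<Rightarrow> (vertex \<Rightarrow> ('r, 'm) module) \<Rightarrow> (vertex \<Rightarrow> 'm \<Rightarrow> 'm) \<Rightarrow> (vertex \<Rightarrow> 'm \<Rightarrow> 'm) \<Rightarrow> bool" where
  "B_diagram R M Om Mh \<longleftrightarrow>
     (\<forall>\<sigma>. module R (M \<sigma>)) \<and>
     (\<forall>\<sigma>. linmap R (M \<sigma>) (M (\<sigma> @ [True])) (Om \<sigma>)) \<and>
     (\<forall>\<sigma>. linmap R (M (\<sigma> @ [False])) (M \<sigma>) (Mh \<sigma>))"

definition kerOm :: "(vertex \<Rightarrow> ('r, 'm) module) \<Rightarrow> (vertex \<Rightarrow> 'm \<Rightarrow> 'm) \<Rightarrow> vertex \<Rightarrow> 'm set" where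
  "kerOm M Om \<sigma> = {x \<in> carrier (M \<sigma>). Om \<sigma> x = \<zero>\<^bsub>M (\<sigma> @ [True])\<^esub>}"

definition imMh :: "(vertex \<Rightarrow> ('r, 'm) module) \<Rightarrow> (vertex \<Rightarrow> 'm \<Rightarrow> 'm) \<Rightarrow> vertex \<Rightarrow> 'm set" where
  "imMh M Mh \<sigma> = Mh \<sigma> ` carrier (M (\<sigma> @ [False]))"

text \<open>A ray is determined by the sequence of appended symbols d :: nat => bool;
  its i-th vertex is sigma^i = [d 0, ..., d (i-1)], so sigma_i = + iff d (i-1).\<close>

definition ray_vertex :: "(nat \<Rightarrow> bool) \<Rightarrow> nat \<Rightarrow> vertex" where
  "ray_vertex d i = map d [0..<i]"

definition mu_tilde ::
  "(vertex \<Rightarrow> ('r, 'm) module) \<Rightarrow> (vertex \<Rightarrow> 'm \<Rightarrow> 'm) \<Rightarrow> (vertex \<Rightarrow> 'm \<Rightarrow> 'm) \<Rightarrow> (nat \<Rightarrow> bool) \<Rightarrow> nat \<Rightarrow> ('m \<times> 'm) set" where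
  "mu_tilde M Om Mh d i =
     (let v = ray_vertex d (i - 1) in
      if d (i - 1)
      then {(Om v y, y) | y. y \<in> carrier (M v)}
      else {(x, Mh v x) | x. x \<in> carrier (M (v @ [False]))})"

definition mu_le ::
  "(vertex \<Rightarrow> ('r, 'm) module) \<Rightarrow> (vertex \<Rightarrow> 'm \<Rightarrow> 'm) \<Rightarrow> (vertex \<Rightarrow> 'm \<Rightarrow> 'm) \<Rightarrow> (nat \<Rightarrow> bool) \<Rightarrow> nat \<Rightarrow> 'm set \<Rightarrow> 'm set" where
  "mu_le M Om Mh d n S =
     {m0 \<in> carrier (M []). \<exists>ms :: nat \<Rightarrow> 'm. ms 0 = m0 \<and> ms n \<in> S \<and>
        (\<forall>i\<in>{1..n}. (ms i, ms (i - 1)) \<in> mu_tilde M Om Mh d i)}"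

end

theory Submission
  imports Defs
begin

text \<open>Walk along a ray greedily, tracking the set \<open>S\<^sub>j \<subseteq> M[j]\<close> of all \<open>m\<^sub>j\<close> linked to
  \<open>m\<close> by a \<open>\<mu>\<close>-tilde chain: go down (to \<open>\<mho>\<close>-preimages) whenever \<open>S\<^sub>j\<close> meets the image
  of \<open>\<mho>\<close>, and up (apply \<open>\<Omega>\<close>) otherwise. If some upward step starts from an \<open>S\<^sub>j\<close>
  meeting the kernel of \<open>\<Omega>\<close>, this is alternative (1), and \<open>0 \<in> S\<^sub>j\<^sub>+\<^sub>1\<close> rules out (2).
  Otherwise every \<open>S\<^sub>j\<close> is nonempty and avoids \<open>0\<close>: going up, no element is sent to \<open>0\<close>;
  going down, a preimage of a nonzero element exists and is nonzero since \<open>\<mho>\<close> is linear.\<close>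

lemma linmap_zero:
  assumes "module R M" "module R N" "linmap R M N f"
  shows "f \<zero>\<^bsub>M\<^esub> = \<zero>\<^bsub>N\<^esub>"
proof -
  interpret M: module R M by fact
  interpret N: module R N by fact
  have f0: "f \<zero>\<^bsub>M\<^esub> \<in> carrier N"
    using assms(3) unfolding linmap_def by auto
  have "f \<zero>\<^bsub>M\<^esub> \<oplus>\<^bsub>N\<^esub> f \<zero>\<^bsub>M\<^esub> = f \<zero>\<^bsub>M\<^esub>"
    using assms(3) unfolding linmap_def by (metis M.zero_closed M.l_zero)
  then show ?thesis
    using f0 N.add.l_cancel_one[of "f \<zero>\<^bsub>M\<^esub>" "f \<zero>\<^bsub>M\<^esub>"] by simp
qed

lemma ray_vertex_0 [simp]: "ray_vertex d 0 = []"
  by (simp add: ray_vertex_def)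

lemma ray_vertex_Suc: "ray_vertex d (Suc j) = ray_vertex d j @ [d j]"
  by (simp add: ray_vertex_def)

context
  fixes M :: "vertex \<Rightarrow> ('r, 'm) module"
    and Om Mh :: "vertex \<Rightarrow> 'm \<Rightarrow> 'm"
begin

definition mu_step :: "vertex \<Rightarrow> bool \<Rightarrow> 'm set \<Rightarrow> 'm set" where
  "mu_step v b S =
     (if b then Om v ` (S \<inter> carrier (M v))
      else {x \<in> carrier (M (v @ [False])). Mh v x \<in> S})"

lemma mu_tilde_Suc_iff:
  "(x, y) \<in> mu_tilde M Om Mh d (Suc j) \<longleftrightarrow> x \<in> mu_step (ray_vertex d j) (d j) {y}"
  by (auto simp: mu_tilde_def mu_step_def Let_def)

primrec ray_reach :: "(nat \<Rightarrow> bool) \<Rightarrow> 'm \<Rightarrow> nat \<Rightarrow> 'm set" where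
  "ray_reach d m 0 = {m}"
| "ray_reach d m (Suc j) = mu_step (ray_vertex d j) (d j) (ray_reach d m j)"

lemma mem_ray_reach_Suc_iff:
  "x \<in> ray_reach d m (Suc j) \<longleftrightarrow> (\<exists>y \<in> ray_reach d m j. (x, y) \<in> mu_tilde M Om Mh d (Suc j))"
  by (auto simp: mu_tilde_Suc_iff mu_step_def)

lemma mem_ray_reach_iff_chain:
  "x \<in> ray_reach d m j \<longleftrightarrow>
     (\<exists>ms. ms 0 = m \<and> ms j = x \<and> (\<forall>i\<in>{1..j}. (ms i, ms (i - 1)) \<in> mu_tilde M Om Mh d i))"
proof (induction j arbitrary: x)
  case 0
  show ?case by (auto intro: exI[of _ "\<lambda>_. m"])
next
  case (Suc j)
  let ?chain = "\<lambda>ms n. \<forall>i\<in>{1..n}. (ms i, ms (i - 1)) \<in> mu_tilde M Om Mh d i"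
  have "x \<in> ray_reach d m (Suc j) \<longleftrightarrow>
        (\<exists>y ms. ms 0 = m \<and> ms j = y \<and> ?chain ms j \<and> (x, y) \<in> mu_tilde M Om Mh d (Suc j))"
    unfolding mem_ray_reach_Suc_iff Bex_def Suc.IH by blast
  also have "\<dots> \<longleftrightarrow> (\<exists>ms. ms 0 = m \<and> ms (Suc j) = x \<and> ?chain ms (Suc j))"
  proof
    assume "\<exists>y ms. ms 0 = m \<and> ms j = y \<and> ?chain ms j \<and> (x, y) \<in> mu_tilde M Om Mh d (Suc j)"
    then obtain ms where ms: "ms 0 = m" "?chain ms j" "(x, ms j) \<in> mu_tilde M Om Mh d (Suc j)"
      by blast
    have "?chain (ms(Suc j := x)) (Suc j)"
      using ms(2,3) by (auto simp: le_Suc_eq)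
    with ms(1) show "\<exists>ms. ms 0 = m \<and> ms (Suc j) = x \<and> ?chain ms (Suc j)"
      by (intro exI[of _ "ms(Suc j := x)"]) simp
  next
    assume "\<exists>ms. ms 0 = m \<and> ms (Suc j) = x \<and> ?chain ms (Suc j)"
    then obtain ms where ms: "ms 0 = m" "ms (Suc j) = x" "?chain ms (Suc j)"
      by blast
    then have "(x, ms j) \<in> mu_tilde M Om Mh d (Suc j)"
      by force
    with ms show "\<exists>y ms. ms 0 = m \<and> ms j = y \<and> ?chain ms j \<and> (x, y) \<in> mu_tilde M Om Mh d (Suc j)"
      by auto
  qed
  finally show ?case .
qed

lemma mem_mu_le_iff:
  "m \<in> mu_le M Om Mh d j S \<longleftrightarrow> m \<in> carrier (M []) \<and> ray_reach d m j \<inter> S \<noteq> {}"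
  unfolding mu_le_def disjoint_iff mem_ray_reach_iff_chain by blast

definition nontrivial_at :: "vertex \<Rightarrow> 'm set \<Rightarrow> bool" where
  "nontrivial_at v S \<longleftrightarrow> S \<inter> carrier (M v) \<noteq> {} \<and> \<zero>\<^bsub>M v\<^esub> \<notin> S"

lemma zero_mem_mu_step_up:
  assumes "S \<inter> kerOm M Om v \<noteq> {}"
  shows "\<zero>\<^bsub>M (v @ [True])\<^esub> \<in> mu_step v True S"
  using assms by (force simp: mu_step_def kerOm_def)

lemma nontrivial_at_mu_step_up:
  assumes "B_diagram R M Om Mh" "nontrivial_at v S" "S \<inter> kerOm M Om v = {}"
  shows "nontrivial_at (v @ [True]) (mu_step v True S)"
proof -
  have "Om v \<in> carrier (M v) \<rightarrow> carrier (M (v @ [True]))"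
    using assms(1) by (simp add: B_diagram_def linmap_def)
  then show ?thesis
    using assms(2,3) by (fastforce simp: nontrivial_at_def mu_step_def kerOm_def)
qed

lemma nontrivial_at_mu_step_down:
  assumes "B_diagram R M Om Mh" "nontrivial_at v S" "S \<inter> imMh M Mh v \<noteq> {}"
  shows "nontrivial_at (v @ [False]) (mu_step v False S)"
proof -
  from assms(3) obtain x where x: "x \<in> carrier (M (v @ [False]))" "Mh v x \<in> S"
    by (auto simp: imMh_def)
  have "Mh v \<zero>\<^bsub>M (v @ [False])\<^esub> = \<zero>\<^bsub>M v\<^esub>"
    using assms(1) unfolding B_diagram_def by (blast intro: linmap_zero)
  with assms(2) have "\<zero>\<^bsub>M (v @ [False])\<^esub> \<notin> mu_step v False S"
    by (simp add: nontrivial_at_def mu_step_def)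
  moreover have "x \<in> mu_step v False S"
    using x by (simp add: mu_step_def)
  ultimately show ?thesis
    using x(1) by (auto simp: nontrivial_at_def)
qed

primrec greedy_walk :: "'m \<Rightarrow> nat \<Rightarrow> vertex \<times> 'm set" where
  "greedy_walk m 0 = ([], {m})"
| "greedy_walk m (Suc j) =
     (let (v, S) = greedy_walk m j; b = (S \<inter> imMh M Mh v = {}) in (v @ [b], mu_step v b S))"

definition greedy_ray :: "'m \<Rightarrow> nat \<Rightarrow> bool" where
  "greedy_ray m j \<longleftrightarrow> snd (greedy_walk m j) \<inter> imMh M Mh (fst (greedy_walk m j)) = {}"

lemma greedy_walk_eq:
  "greedy_walk m j = (ray_vertex (greedy_ray m) j, ray_reach (greedy_ray m) m j)"
  by (induction j) (simp_all add: ray_vertex_Suc greedy_ray_def Let_def)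

lemma greedy_ray_iff:
  "greedy_ray m j \<longleftrightarrow>
     ray_reach (greedy_ray m) m j \<inter> imMh M Mh (ray_vertex (greedy_ray m) j) = {}"
  by (subst greedy_ray_def) (simp add: greedy_walk_eq)

lemma nontrivial_at_greedy_ray:
  fixes m :: 'm
  defines "d \<equiv> greedy_ray m"
  assumes "B_diagram R M Om Mh" "nontrivial_at [] {m}"
    and avoids_kernel: "\<And>j. ray_reach d m j \<inter> imMh M Mh (ray_vertex d j) = {} \<Longrightarrow>
                                ray_reach d m j \<inter> kerOm M Om (ray_vertex d j) = {}"
  shows "nontrivial_at (ray_vertex d j) (ray_reach d m j)"
proof (induction j)
  case 0
  then show ?case using assms(3) by simp
next
  case (Suc j)
  show ?case
  proof (cases "d j")
    case True
    then have "ray_reach d m j \<inter> kerOm M Om (ray_vertex d j) = {}"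
      using avoids_kernel greedy_ray_iff unfolding d_def by blast
    then show ?thesis
      using True Suc.IH nontrivial_at_mu_step_up[OF assms(2)] by (simp add: ray_vertex_Suc)
  next
    case False
    then have "ray_reach d m j \<inter> imMh M Mh (ray_vertex d j) \<noteq> {}"
      using greedy_ray_iff unfolding d_def by blast
    then show ?thesis
      using False Suc.IH nontrivial_at_mu_step_down[OF assms(2)] by (simp add: ray_vertex_Suc)
  qed
qed

end

theorem lemma5p12:
  fixes R :: "('r, 'c) ring_scheme"
    and M :: "vertex \<Rightarrow> ('r, 'm) module"
    and Om Mh :: "vertex \<Rightarrow> 'm \<Rightarrow> 'm"
    and m :: 'm
  assumes "cring R"
    and "B_diagram R M Om Mh"
    and "\<And>\<sigma>. imMh M Mh \<sigma> \<subseteq> kerOm M Om \<sigma>"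
    and "m \<in> carrier (M [])"
    and "m \<noteq> \<zero>\<^bsub>M []\<^esub>"
  shows "\<exists>d :: nat \<Rightarrow> bool.
    (let P1 = (\<exists>j::nat. m \<in> mu_le M Om Mh d j (kerOm M Om (ray_vertex d j))
                            - mu_le M Om Mh d j (imMh M Mh (ray_vertex d j)));
         P2 = ((\<forall>j::nat. m \<in> mu_le M Om Mh d j (carrier (M (ray_vertex d j)))
                            - mu_le M Om Mh d j {\<zero>\<^bsub>M (ray_vertex d j)\<^esub>}) \<and>
               m \<in> (\<Inter>i. mu_le M Om Mh d i (carrier (M (ray_vertex d i))))
                    - (\<Union>i. mu_le M Om Mh d i {\<zero>\<^bsub>M (ray_vertex d i)\<^esub>}))
     in (P1 \<and> \<not> P2) \<or> (\<not> P1 \<and> P2))"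
proof -
  define d where "d = greedy_ray M Om Mh m"
  let ?S = "ray_reach M Om Mh d m" and ?v = "ray_vertex d"
  let ?P1 = "\<exists>j. ?S j \<inter> kerOm M Om (?v j) \<noteq> {} \<and> ?S j \<inter> imMh M Mh (?v j) = {}"
  let ?P2 = "\<forall>j. nontrivial_at M (?v j) (?S j)"
  have "(?P1 \<and> \<not> ?P2) \<or> (\<not> ?P1 \<and> ?P2)"
  proof (cases ?P1)
    case True
    then obtain j where j: "?S j \<inter> kerOm M Om (?v j) \<noteq> {}" "?S j \<inter> imMh M Mh (?v j) = {}"
      by blast
    moreover have "d j"
      using j(2) greedy_ray_iff[of M Om Mh m j] unfolding d_def by simp
    ultimately have "\<zero>\<^bsub>M (?v (Suc j))\<^esub> \<in> ?S (Suc j)"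
      using zero_mem_mu_step_up by (simp add: ray_vertex_Suc)
    then have "\<not> nontrivial_at M (?v (Suc j)) (?S (Suc j))"
      by (simp only: nontrivial_at_def) blast
    with True show ?thesis
      by blast
  next
    case False
    have "nontrivial_at M [] {m}"
      using assms(4,5) by (simp add: nontrivial_at_def)
    with False show ?thesis
      using nontrivial_at_greedy_ray[OF assms(2)] unfolding d_def by blast
  qed
  then show ?thesis
    using assms(4)
    by (intro exI[of _ d]) (auto simp: Let_def mem_mu_le_iff nontrivial_at_def)
qed

end
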